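(* For every $k\ge 1$ and every $g\in G_k$, we have $g^2\in G_k'$.
   Context: $G_k$ is the subgroup of the automorphism group $B_k\cong\wr_{i=1}^kC_2$ of the binary rooted tree of depth $k$ consisting of automorphisms acting by even permutations on the $2^k$ leaves; $G_k\cong\mathrm{Syl}_2(A_{2^k})$. $G_k'$ is its commutator subgroup. *)

theory Defs
  imports "HOL-Algebra.Algebra" "HOL-Combinatorics.Permutations"
begin

text \<open>The binary rooted tree of depth k: vertices are boolean words of length at most k,
  the root is the empty word, the children of w are w@[False] and w@[True];
  the 2^k leaves are the words of length exactly k.\<close>

definition tree_vertices :: "nat \<Rightarrow> bool list set" where
  "tree_vertices k = {w. length w \<le> k}"

definition tree_leaves :: "nat \<Rightarrow> bool list set" where
  "tree_leaves k = {w. length w = k}"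

definition tree_edge :: "bool list \<Rightarrow> bool list \<Rightarrow> bool" where
  "tree_edge v w \<longleftrightarrow> (\<exists>b. w = v @ [b] \<or> v = w @ [b])"

definition tree_aut :: "nat \<Rightarrow> (bool list \<Rightarrow> bool list) set" where
  "tree_aut k = {g \<in> Bij (tree_vertices k). g [] = [] \<and>
     (\<forall>v\<in>tree_vertices k. \<forall>w\<in>tree_vertices k. tree_edge (g v) (g w) \<longleftrightarrow> tree_edge v w)}"

definition leaf_perm :: "nat \<Rightarrow> (bool list \<Rightarrow> bool list) \<Rightarrow> bool list \<Rightarrow> bool list" where
  "leaf_perm k g = (\<lambda>w. if w \<in> tree_leaves k then g w else w)"

definition B_group :: "nat \<Rightarrow> (bool list \<Rightarrow> bool list) monoid" where
  "B_group k = (BijGroup (tree_vertices k)) \<lparr>carrier := tree_aut k\<rparr>"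

definition G_group :: "nat \<Rightarrow> (bool list \<Rightarrow> bool list) monoid" where
  "G_group k = (BijGroup (tree_vertices k))
      \<lparr>carrier := {g \<in> tree_aut k. evenperm (leaf_perm k g)}\<rparr>"

end

theory Submission
  imports Defs
begin

text \<open>Induct on the depth \<open>m\<close> above which \<open>g\<close> acts. If \<open>g\<close> only changes the first
  \<open>m + 1\<close> letters of a word, then \<open>g = h e\<close>, where \<open>h\<close> acts like \<open>g\<close> on the first \<open>m\<close>
  letters and trivially below, and the involution \<open>e\<close> swaps the children at level \<open>m\<close>
  exactly where \<open>g\<close> does. On the leaves \<open>h\<close> permutes pairs of sibling leaves as blocks,
  so it is even, hence \<open>h\<close> and \<open>e = h\<inverse> g\<close> lie in \<open>G\<^sub>k\<close>. Finally
  \<open>(h e)\<^sup>2 = [h e h\<inverse>, h] h\<^sup>2\<close> because \<open>e\<close> is an involution, and \<open>h\<^sup>2 \<in> G\<^sub>k'\<close> by induction.\<close>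

lemma (in group) square_mult_involution_in_derived:
  assumes h: "h \<in> carrier G" and e: "e \<in> carrier G" and ee: "e \<otimes> e = \<one>"
    and hh: "h \<otimes> h \<in> derived G (carrier G)"
  shows "(h \<otimes> e) \<otimes> (h \<otimes> e) \<in> derived G (carrier G)"
proof -
  define a where "a = h \<otimes> e \<otimes> inv h"
  have a: "a \<in> carrier G" using a_def h e by simp
  have inv_a: "inv a = a"
    unfolding a_def using h e inv_equality[OF ee e e] by (simp add: inv_mult_group m_assoc)
  have "a \<otimes> h \<otimes> inv a \<otimes> inv h \<in> derived G (carrier G)"
    unfolding derived_def by (rule generate.incl) (use a h in blast)
  moreover have "(h \<otimes> e) \<otimes> (h \<otimes> e) = (a \<otimes> h \<otimes> inv a \<otimes> inv h) \<otimes> (h \<otimes> h)"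
    unfolding inv_a unfolding a_def using h e by (simp add: m_assoc inv_solve_left')
  ultimately show ?thesis
    using hh unfolding derived_def by (simp add: generate.eng)
qed

lemma finite_tree_vertices: "finite (tree_vertices k)"
  using finite_lists_length_le[of "UNIV :: bool set" k] by (simp add: tree_vertices_def)

lemma finite_words_length: "finite {w :: bool list. length w = n}"
  using finite_lists_length_eq[of "UNIV :: bool set" n] by simp

lemma tree_edge_commute: "tree_edge v w \<longleftrightarrow> tree_edge w v"
  by (auto simp: tree_edge_def)

lemma tree_aut_Bij: "g \<in> tree_aut k \<Longrightarrow> g \<in> Bij (tree_vertices k)"
  by (simp add: tree_aut_def)

lemma tree_aut_inj_on: "g \<in> tree_aut k \<Longrightarrow> inj_on g (tree_vertices k)"
  by (simp add: tree_aut_def Bij_def bij_betw_def)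

lemma tree_aut_edge_child:
  assumes "g \<in> tree_aut k" and "length v < k"
  shows "tree_edge (g v) (g (v @ [b]))"
  using assms by (auto simp: tree_aut_def tree_vertices_def tree_edge_def)

lemma tree_aut_append:
  assumes g: "g \<in> tree_aut k" and v: "length v < k"
  shows "\<exists>c. g (v @ [b]) = g v @ [c]"
  using v
proof (induction v arbitrary: b rule: rev_induct)
  case Nil
  have "g [] = []" using g by (simp add: tree_aut_def)
  then show ?case using tree_aut_edge_child[OF g Nil] by (auto simp: tree_edge_def)
next
  case (snoc a p)
  obtain d where gp: "g (p @ [a]) = g p @ [d]" using snoc by force
  from tree_aut_edge_child[OF g snoc.prems]
  obtain c where "g (p @ [a] @ [b]) = g (p @ [a]) @ [c] \<or> g (p @ [a]) = g (p @ [a] @ [b]) @ [c]"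
    by (auto simp: tree_edge_def)
  moreover have "g (p @ [a]) \<noteq> g (p @ [a] @ [b]) @ [c]"
  proof
    assume "g (p @ [a]) = g (p @ [a] @ [b]) @ [c]"
    then have "g (p @ [a, b]) = g p" using gp by simp
    moreover have "p @ [a, b] \<in> tree_vertices k" "p \<in> tree_vertices k"
      using snoc.prems by (auto simp: tree_vertices_def)
    ultimately show False using inj_onD[OF tree_aut_inj_on[OF g]] by fastforce
  qed
  ultimately show ?case by auto
qed

lemma tree_aut_length:
  assumes g: "g \<in> tree_aut k" and v: "length v \<le> k"
  shows "length (g v) = length v"
  using v
proof (induction v rule: rev_induct)
  case Nil
  then show ?case using g by (simp add: tree_aut_def)
next
  case (snoc b v)
  then show ?case using tree_aut_append[OF g, of v b] by auto
qed

definition swaps_children :: "(bool list \<Rightarrow> bool list) \<Rightarrow> bool list \<Rightarrow> bool" where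
  "swaps_children g v \<longleftrightarrow> g (v @ [False]) \<noteq> g v @ [False]"

lemma tree_aut_append_swap:
  assumes g: "g \<in> tree_aut k" and v: "length v < k"
  shows "g (v @ [c]) = g v @ [c \<noteq> swaps_children g v]"
proof -
  obtain c0 where c0: "g (v @ [False]) = g v @ [c0]" using tree_aut_append[OF g v] by blast
  obtain c1 where c1: "g (v @ [True]) = g v @ [c1]" using tree_aut_append[OF g v] by blast
  have "v @ [False] \<in> tree_vertices k" "v @ [True] \<in> tree_vertices k"
    using v by (auto simp: tree_vertices_def)
  then have "g (v @ [False]) \<noteq> g (v @ [True])"
    using inj_onD[OF tree_aut_inj_on[OF g]] by blast
  then have "c0 \<noteq> c1" using c0 c1 by auto
  then show ?thesis using c0 c1 by (cases c; cases c0; auto simp: swaps_children_def)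
qed

lemma tree_autI:
  assumes f: "f \<in> Bij (tree_vertices k)" and root: "f [] = []"
    and append: "\<And>v b. length v < k \<Longrightarrow> \<exists>c. f (v @ [b]) = f v @ [c]"
  shows "f \<in> tree_aut k"
proof -
  have length: "length (f v) = length v" if "length v \<le> k" for v
    using that
  proof (induction v rule: rev_induct)
    case (snoc b v)
    then show ?case using append[of v b] by auto
  qed (simp add: root)
  have inj: "inj_on f (tree_vertices k)" using f by (simp add: Bij_def bij_betw_def)
  have child_edge: "tree_edge (f v) (f (v @ [b]))" if "length v < k" for v b
    using append[OF that, of b] by (auto simp: tree_edge_def)
  have parent_edge: "tree_edge x y"
    if e: "f y = f x @ [b]" and x: "x \<in> tree_vertices k" and y: "y \<in> tree_vertices k" for x y b
  proof -
    have "length y = Suc (length x)"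
      using length[of x] length[of y] x y e by (simp add: tree_vertices_def)
    then obtain y0 a where y0: "y = y0 @ [a]" by (auto simp: length_Suc_conv_rev)
    then have "length y0 < k" using y by (simp add: tree_vertices_def)
    then obtain c where "f y = f y0 @ [c]" using append y0 by blast
    then have "f y0 = f x" using e by simp
    then have "y0 = x" using inj_onD[OF inj _ _ x] \<open>length y0 < k\<close> by (simp add: tree_vertices_def)
    then show ?thesis using y0 by (auto simp: tree_edge_def)
  qed
  have "tree_edge (f v) (f w) \<longleftrightarrow> tree_edge v w"
    if v: "v \<in> tree_vertices k" and w: "w \<in> tree_vertices k" for v w
  proof
    assume "tree_edge v w"
    then obtain b where "w = v @ [b] \<or> v = w @ [b]" by (auto simp: tree_edge_def)
    then show "tree_edge (f v) (f w)"
      using v w child_edge tree_edge_commute by (fastforce simp: tree_vertices_def)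
  next
    assume "tree_edge (f v) (f w)"
    then obtain b where "f w = f v @ [b] \<or> f v = f w @ [b]" by (auto simp: tree_edge_def)
    then show "tree_edge v w"
      using parent_edge[OF _ v w] parent_edge[OF _ w v] by (auto simp: tree_edge_def)
  qed
  then show ?thesis using f root by (auto simp: tree_aut_def)
qed

lemma tree_aut_compose:
  assumes g: "g \<in> tree_aut k" and f: "f \<in> tree_aut k"
  shows "compose (tree_vertices k) g f \<in> tree_aut k"
proof (rule tree_autI)
  show "compose (tree_vertices k) g f \<in> Bij (tree_vertices k)"
    using g f by (intro compose_Bij) (auto simp: tree_aut_def)
  show "compose (tree_vertices k) g f [] = []"
    using g f by (simp add: compose_def tree_aut_def tree_vertices_def)
  fix v :: "bool list" and b :: bool assume v: "length v < k"
  obtain c where c: "f (v @ [b]) = f v @ [c]" using tree_aut_append[OF f v] by blast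
  have "length (f v) < k" using tree_aut_length[OF f, of v] v by simp
  then obtain d where "g (f v @ [c]) = g (f v) @ [d]" using tree_aut_append[OF g] by blast
  then show "\<exists>c. compose (tree_vertices k) g f (v @ [b]) = compose (tree_vertices k) g f v @ [c]"
    using v c by (simp add: compose_def tree_vertices_def)
qed

lemma tree_aut_inv:
  assumes g: "g \<in> tree_aut k"
  shows "restrict (inv_into (tree_vertices k) g) (tree_vertices k) \<in> tree_aut k"
proof (rule tree_autI)
  let ?S = "tree_vertices k"
  have inj: "inj_on g ?S" using tree_aut_inj_on[OF g] .
  have onto: "g ` ?S = ?S" using g by (simp add: tree_aut_def Bij_def bij_betw_def)
  show "restrict (inv_into ?S g) ?S \<in> Bij ?S"
    using restrict_inv_into_Bij[OF tree_aut_Bij[OF g]] .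
  have "[] \<in> ?S" by (simp add: tree_vertices_def)
  then show "restrict (inv_into ?S g) ?S [] = []"
    using inv_into_f_f[OF inj, of "[]"] g by (simp add: tree_aut_def)
  fix v :: "bool list" and b :: bool assume v: "length v < k"
  have vS: "v @ [b] \<in> ?S" "v \<in> ?S" using v by (auto simp: tree_vertices_def)
  define w where "w = inv_into ?S g (v @ [b])"
  have wS: "w \<in> ?S" unfolding w_def using vS onto by (metis inv_into_into)
  have gw: "g w = v @ [b]" unfolding w_def using vS onto by (simp add: f_inv_into_f)
  have "length w = Suc (length v)"
    using tree_aut_length[OF g, of w] wS gw by (simp add: tree_vertices_def)
  then obtain w0 a where w: "w = w0 @ [a]" by (auto simp: length_Suc_conv_rev)
  have w0: "length w0 < k" "w0 \<in> ?S" using wS w by (auto simp: tree_vertices_def)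
  obtain c where "g w = g w0 @ [c]" using tree_aut_append[OF g w0(1)] w by blast
  then have "inv_into ?S g v = w0" using gw inv_into_f_f[OF inj w0(2)] by simp
  then show "\<exists>c. restrict (inv_into ?S g) ?S (v @ [b]) = restrict (inv_into ?S g) ?S v @ [c]"
    using vS w w_def by auto
qed

lemma tree_aut_bij_betw_level:
  assumes g: "g \<in> tree_aut k" and j: "j \<le> k"
  shows "bij_betw g {w. length w = j} {w. length w = j}"
proof -
  have "{w :: bool list. length w = j} \<subseteq> tree_vertices k" using j by (auto simp: tree_vertices_def)
  then have inj: "inj_on g {w. length w = j}" using inj_on_subset tree_aut_inj_on[OF g] by blast
  have "g ` {w. length w = j} \<subseteq> {w. length w = j}" using tree_aut_length[OF g] j by auto
  then have "g ` {w. length w = j} = {w. length w = j}"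
    using endo_inj_surj[OF finite_words_length _ inj] by blast
  then show ?thesis using inj by (simp add: bij_betw_def)
qed

lemma leaf_perm_permutes:
  assumes g: "g \<in> tree_aut k"
  shows "leaf_perm k g permutes tree_leaves k"
proof (rule bij_imp_permutes)
  have "bij_betw g (tree_leaves k) (tree_leaves k)"
    using tree_aut_bij_betw_level[OF g le_refl] by (simp add: tree_leaves_def)
  then show "bij_betw (leaf_perm k g) (tree_leaves k) (tree_leaves k)"
    by (rule bij_betw_cong[THEN iffD1, rotated]) (simp add: leaf_perm_def)
qed (simp add: leaf_perm_def)

lemma permutation_leaf_perm: "g \<in> tree_aut k \<Longrightarrow> permutation (leaf_perm k g)"
  using permutes_imp_permutation[OF _ leaf_perm_permutes] finite_words_length
  by (simp add: tree_leaves_def)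

lemma leaf_perm_compose:
  assumes g: "g \<in> tree_aut k" and f: "f \<in> tree_aut k"
  shows "leaf_perm k (compose (tree_vertices k) g f) = leaf_perm k g \<circ> leaf_perm k f"
proof
  fix w
  show "leaf_perm k (compose (tree_vertices k) g f) w = (leaf_perm k g \<circ> leaf_perm k f) w"
  proof (cases "w \<in> tree_leaves k")
    case True
    then have "length (f w) = k" using tree_aut_length[OF f, of w] by (simp add: tree_leaves_def)
    then show ?thesis
      using True by (simp add: leaf_perm_def compose_def tree_leaves_def tree_vertices_def)
  qed (simp add: leaf_perm_def)
qed

lemma leaf_perm_id: "leaf_perm k (\<lambda>x\<in>tree_vertices k. x) = id"
  by (auto simp: leaf_perm_def tree_leaves_def tree_vertices_def)

lemma carrier_G_group: "carrier (G_group k) = {g \<in> tree_aut k. evenperm (leaf_perm k g)}"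
  by (simp add: G_group_def)

lemma mult_G_group:
  "x \<in> Bij (tree_vertices k) \<Longrightarrow> y \<in> Bij (tree_vertices k) \<Longrightarrow>
   x \<otimes>\<^bsub>G_group k\<^esub> y = compose (tree_vertices k) x y"
  by (simp add: G_group_def BijGroup_def)

lemma one_G_group: "\<one>\<^bsub>G_group k\<^esub> = (\<lambda>x\<in>tree_vertices k. x)"
  by (simp add: G_group_def BijGroup_def)

lemma subgroup_G_group: "subgroup (carrier (G_group k)) (BijGroup (tree_vertices k))"
proof (rule subgroup.intro)
  let ?S = "tree_vertices k"
  show "carrier (G_group k) \<subseteq> carrier (BijGroup ?S)"
    by (auto simp: carrier_G_group BijGroup_def tree_aut_def)
  show "x \<otimes>\<^bsub>BijGroup ?S\<^esub> y \<in> carrier (G_group k)"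
    if "x \<in> carrier (G_group k)" "y \<in> carrier (G_group k)" for x y
    using that tree_aut_compose
    by (simp add: carrier_G_group BijGroup_def tree_aut_Bij leaf_perm_compose evenperm_comp
        permutation_leaf_perm)
  have "(\<lambda>x\<in>?S. x) \<in> tree_aut k"
    by (rule tree_autI) (auto simp: id_Bij tree_vertices_def)
  then show "\<one>\<^bsub>BijGroup ?S\<^esub> \<in> carrier (G_group k)"
    by (simp add: BijGroup_def carrier_G_group leaf_perm_id)
  show "inv\<^bsub>BijGroup ?S\<^esub> x \<in> carrier (G_group k)" if x: "x \<in> carrier (G_group k)" for x
  proof -
    let ?y = "restrict (inv_into ?S x) ?S"
    have a: "x \<in> tree_aut k" "evenperm (leaf_perm k x)" using x by (auto simp: carrier_G_group)
    have ya: "?y \<in> tree_aut k" using tree_aut_inv[OF a(1)] .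
    have "compose ?S ?y x = (\<lambda>x\<in>?S. x)" using Bij_compose_restrict_eq[OF tree_aut_Bij[OF a(1)]] .
    then have "leaf_perm k ?y \<circ> leaf_perm k x = id" using leaf_perm_compose[OF ya a(1)] leaf_perm_id by simp
    then have "evenperm (leaf_perm k ?y)"
      using a ya evenperm_id by (metis evenperm_comp permutation_leaf_perm)
    then show ?thesis using inv_BijGroup[OF tree_aut_Bij[OF a(1)]] ya by (simp add: carrier_G_group)
  qed
qed

lemma group_G_group: "group (G_group k)"
proof -
  have "G_group k = (BijGroup (tree_vertices k))\<lparr>carrier := carrier (G_group k)\<rparr>"
    by (simp add: G_group_def)
  then show ?thesis using group.subgroup_imp_group[OF group_BijGroup subgroup_G_group] by metis
qed

definition prefix_action :: "(bool list \<Rightarrow> bool list) \<Rightarrow> nat \<Rightarrow> bool list \<Rightarrow> bool list" where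
  "prefix_action q n w = (if length w = Suc n then q (butlast w) @ [last w] else w)"

text \<open>A transposition of two words of length \<open>n\<close> acts on words of length \<open>n + 1\<close>
  as a product of two transpositions.\<close>

lemma evenperm_prefix_action:
  assumes "q permutes {u :: bool list. length u = n}"
  shows "permutation (prefix_action q n) \<and> evenperm (prefix_action q n)"
  using assms finite_words_length
proof (induction rule: permutes_induct)
  case id
  have "prefix_action (\<lambda>a. a) n = id"
    by (rule ext) (auto simp: prefix_action_def intro!: append_butlast_last_id)
  then show ?case by (simp flip: id_def)
next
  case (swap a b p)
  let ?T = "transpose (a @ [False]) (b @ [False]) \<circ> transpose (a @ [True]) (b @ [True])"
  have "prefix_action (transpose a b \<circ> p) n = ?T \<circ> prefix_action p n"
  proof
    fix w :: "bool list"
    have "length (p (butlast w)) = n" if "length w = Suc n"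
      using that permutes_in_image[OF \<open>p permutes {u. length u = n}\<close>] by simp
    then show "prefix_action (transpose a b \<circ> p) n w = (?T \<circ> prefix_action p n) w"
      using swap \<open>a \<noteq> b\<close>
      by (cases "last w") (auto simp: prefix_action_def transpose_def)
  qed
  moreover have "permutation ?T" "evenperm ?T"
    using \<open>a \<noteq> b\<close>
    by (simp_all add: permutation_compose permutation_swap_id evenperm_comp evenperm_swap)
  ultimately show ?case
    using swap.IH by (metis permutation_compose evenperm_comp)
qed

definition acts_within_depth :: "nat \<Rightarrow> nat \<Rightarrow> (bool list \<Rightarrow> bool list) \<Rightarrow> bool" where
  "acts_within_depth k m g \<longleftrightarrow> (\<forall>w\<in>tree_vertices k. g w = g (take m w) @ drop m w)"

definition truncation :: "nat \<Rightarrow> nat \<Rightarrow> (bool list \<Rightarrow> bool list) \<Rightarrow> bool list \<Rightarrow> bool list" where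
  "truncation k m g = (\<lambda>w\<in>tree_vertices k. g (take m w) @ drop m w)"

lemma length_truncation:
  assumes g: "g \<in> tree_aut k" and w: "w \<in> tree_vertices k"
  shows "length (truncation k m g w) = length w"
  using tree_aut_length[OF g, of "take m w"] w by (simp add: truncation_def tree_vertices_def)

lemma truncation_tree_aut:
  assumes g: "g \<in> tree_aut k"
  shows "truncation k m g \<in> tree_aut k"
proof (rule tree_autI)
  let ?S = "tree_vertices k" and ?h = "truncation k m g"
  have "inj_on ?h ?S"
  proof (rule inj_onI)
    fix x y assume x: "x \<in> ?S" and y: "y \<in> ?S" and e: "?h x = ?h y"
    have "take m x \<in> ?S" "take m y \<in> ?S" using x y by (auto simp: tree_vertices_def)
    moreover have "length x = length y" using length_truncation[OF g] x y e by metis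
    then have "length (g (take m x)) = length (g (take m y))"
      using tree_aut_length[OF g] x by (simp add: tree_vertices_def)
    moreover have "g (take m x) @ drop m x = g (take m y) @ drop m y"
      using e x y by (simp add: truncation_def)
    ultimately have "take m x = take m y" "drop m x = drop m y"
      using inj_onD[OF tree_aut_inj_on[OF g]] by auto
    then show "x = y" by (metis append_take_drop_id)
  qed
  moreover have "?h ` ?S \<subseteq> ?S" using length_truncation[OF g] by (auto simp: tree_vertices_def)
  ultimately have "bij_betw ?h ?S ?S"
    using endo_inj_surj[OF finite_tree_vertices] by (simp add: bij_betw_def)
  then show "?h \<in> Bij ?S" by (simp add: Bij_def truncation_def)
  show "?h [] = []" using g by (simp add: truncation_def tree_vertices_def tree_aut_def)
  fix v :: "bool list" and b :: bool assume v: "length v < k"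
  then show "\<exists>c. ?h (v @ [b]) = ?h v @ [c]"
    using tree_aut_append[OF g v, of b]
    by (cases "m \<le> length v") (auto simp: truncation_def tree_vertices_def)
qed

lemma acts_within_depth_truncation: "acts_within_depth k m (truncation k m g)"
  by (auto simp: acts_within_depth_def truncation_def tree_vertices_def)

text \<open>For \<open>m < k\<close> the truncation does not move the last letter of a leaf, so on the
  leaves it is the prefix action of its action on level \<open>k - 1\<close>.\<close>

lemma evenperm_leaf_perm_truncation:
  assumes g: "g \<in> tree_aut k" and m: "m < k"
  shows "evenperm (leaf_perm k (truncation k m g))"
proof -
  obtain n where k: "k = Suc n" using m by (cases k) auto
  let ?h = "truncation k m g"
  define q where "q = (\<lambda>u :: bool list. if length u = n then ?h u else u)"
  have "bij_betw ?h {u. length u = n} {u. length u = n}"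
    using tree_aut_bij_betw_level[OF truncation_tree_aut[OF g]] k by simp
  then have "bij_betw q {u. length u = n} {u. length u = n}"
    by (rule bij_betw_cong[THEN iffD1, rotated]) (simp add: q_def)
  then have q: "q permutes {u. length u = n}" by (rule bij_imp_permutes) (simp add: q_def)
  have "leaf_perm k ?h = prefix_action q n"
  proof
    fix w :: "bool list"
    show "leaf_perm k ?h w = prefix_action q n w"
    proof (cases "length w = Suc n")
      case True
      then obtain u c where w: "w = u @ [c]" and u: "length u = n"
        by (auto simp: length_Suc_conv_rev)
      then have "?h (u @ [c]) = ?h u @ [c]"
        using k m by (simp add: truncation_def tree_vertices_def)
      then show ?thesis
        using w u k by (simp add: leaf_perm_def prefix_action_def q_def tree_leaves_def)
    qed (simp add: k leaf_perm_def prefix_action_def tree_leaves_def)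
  qed
  then show ?thesis using evenperm_prefix_action[OF q] by simp
qed

definition level_swap :: "nat \<Rightarrow> nat \<Rightarrow> (bool list \<Rightarrow> bool list) \<Rightarrow> bool list \<Rightarrow> bool list" where
  "level_swap k m g = (\<lambda>w\<in>tree_vertices k.
     if m < length w then w[m := (w ! m \<noteq> swaps_children g (take m w))] else w)"

lemma level_swap_in: "w \<in> tree_vertices k \<Longrightarrow> level_swap k m g w \<in> tree_vertices k"
  by (simp add: level_swap_def tree_vertices_def)

lemma level_swap_level_swap:
  assumes w: "w \<in> tree_vertices k"
  shows "level_swap k m g (level_swap k m g w) = w"
  using w level_swap_in[OF w] by (cases "swaps_children g (take m w)") (auto simp: level_swap_def)

lemma level_swap_Bij: "level_swap k m g \<in> Bij (tree_vertices k)"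
proof -
  have "bij_betw (level_swap k m g) (tree_vertices k) (tree_vertices k)"
    by (rule bij_betw_byWitness[where f' = "level_swap k m g"])
      (auto simp: level_swap_level_swap level_swap_in)
  then show ?thesis by (simp add: Bij_def level_swap_def)
qed

lemma compose_level_swap_self:
  "compose (tree_vertices k) (level_swap k m g) (level_swap k m g) = (\<lambda>x\<in>tree_vertices k. x)"
  by (rule ext) (simp add: compose_def level_swap_level_swap)

lemma truncation_compose_level_swap:
  assumes g: "g \<in> tree_aut k" and m: "m < k" and depth: "acts_within_depth k (Suc m) g"
  shows "compose (tree_vertices k) (truncation k m g) (level_swap k m g) = g"
proof (rule extensionalityI)
  let ?S = "tree_vertices k"
  show "compose ?S (truncation k m g) (level_swap k m g) \<in> extensional ?S"
    by (rule compose_extensional)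
  show "g \<in> extensional ?S" using g by (simp add: tree_aut_def Bij_def)
  fix w assume w: "w \<in> ?S"
  show "compose ?S (truncation k m g) (level_swap k m g) w = g w"
  proof (cases "m < length w")
    case False
    then show ?thesis using w by (simp add: compose_def truncation_def level_swap_def)
  next
    case True
    define x where "x = (w ! m \<noteq> swaps_children g (take m w))"
    have "level_swap k m g w = take m w @ x # drop (Suc m) w"
      using w True by (simp add: level_swap_def x_def upd_conv_take_nth_drop)
    moreover have "g w = g (take m w @ [w ! m]) @ drop (Suc m) w"
      using depth w True by (simp add: acts_within_depth_def take_Suc_conv_app_nth)
    moreover have "g (take m w @ [w ! m]) = g (take m w) @ [x]"
      unfolding x_def using tree_aut_append_swap[OF g] True m by simp
    ultimately show ?thesis
      using w level_swap_in[OF w, of m g] True by (simp add: compose_def truncation_def)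
  qed
qed

lemma acts_within_depth_zero:
  assumes "g \<in> tree_aut k" and "acts_within_depth k 0 g"
  shows "g = \<one>\<^bsub>G_group k\<^esub>"
proof (rule extensionalityI)
  show "g \<in> extensional (tree_vertices k)" using assms by (simp add: tree_aut_def Bij_def)
qed (use assms in \<open>auto simp: one_G_group acts_within_depth_def tree_aut_def\<close>)

lemma truncation_in_G_group:
  assumes "g \<in> tree_aut k" and "m < k"
  shows "truncation k m g \<in> carrier (G_group k)"
  using truncation_tree_aut evenperm_leaf_perm_truncation assms by (simp add: carrier_G_group)

lemma G_group_mult_truncation_level_swap:
  assumes "g \<in> tree_aut k" and "m < k" and "acts_within_depth k (Suc m) g"
  shows "truncation k m g \<otimes>\<^bsub>G_group k\<^esub> level_swap k m g = g"
  using truncation_compose_level_swap[OF assms] truncation_tree_aut[OF assms(1)] level_swap_Bij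
  by (simp add: mult_G_group tree_aut_Bij)

lemma level_swap_in_G_group:
  assumes g: "g \<in> carrier (G_group k)" and m: "m < k" and depth: "acts_within_depth k (Suc m) g"
  shows "level_swap k m g \<in> carrier (G_group k)"
proof -
  let ?B = "BijGroup (tree_vertices k)" and ?h = "truncation k m g" and ?e = "level_swap k m g"
  have ga: "g \<in> tree_aut k" using g by (simp add: carrier_G_group)
  have h: "?h \<in> carrier (G_group k)" using truncation_in_G_group[OF ga m] .
  have hB: "?h \<in> carrier ?B" and eB: "?e \<in> carrier ?B" and gB: "g \<in> carrier ?B"
    using truncation_tree_aut[OF ga] ga level_swap_Bij by (auto simp: BijGroup_def tree_aut_Bij)
  have "?h \<otimes>\<^bsub>?B\<^esub> ?e = g"
    using G_group_mult_truncation_level_swap[OF ga m depth] by (simp add: G_group_def)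
  then have "?e = inv\<^bsub>?B\<^esub> ?h \<otimes>\<^bsub>?B\<^esub> g"
    using group.inv_solve_left[OF group_BijGroup eB hB gB] by simp
  then show ?thesis
    using subgroup.m_closed[OF subgroup_G_group subgroup.m_inv_closed[OF subgroup_G_group h] g]
    by simp
qed

lemma square_in_derived_if_acts_within_depth:
  assumes "m \<le> k" and "g \<in> carrier (G_group k)" and "acts_within_depth k m g"
  shows "g \<otimes>\<^bsub>G_group k\<^esub> g \<in> derived (G_group k) (carrier (G_group k))"
  using assms
proof (induction m arbitrary: g)
  case 0
  then have "g = \<one>\<^bsub>G_group k\<^esub>"
    using acts_within_depth_zero by (simp add: carrier_G_group)
  then show ?case
    using group.is_monoid[OF group_G_group] by (simp add: derived_def generate.one)
next
  case (Suc m)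
  let ?G = "G_group k" and ?h = "truncation k m g" and ?e = "level_swap k m g"
  have g: "g \<in> tree_aut k" and m: "m < k" using Suc.prems by (auto simp: carrier_G_group)
  have h: "?h \<in> carrier ?G" using truncation_in_G_group[OF g m] .
  have e: "?e \<in> carrier ?G" using level_swap_in_G_group[OF Suc.prems(2) m Suc.prems(3)] .
  have "?h \<otimes>\<^bsub>?G\<^esub> ?h \<in> derived ?G (carrier ?G)"
    using Suc.IH[OF _ h] m acts_within_depth_truncation by simp
  moreover have "?e \<otimes>\<^bsub>?G\<^esub> ?e = \<one>\<^bsub>?G\<^esub>"
    using level_swap_Bij by (simp add: mult_G_group one_G_group compose_level_swap_self)
  ultimately show ?case
    using group.square_mult_involution_in_derived[OF group_G_group h e]
      G_group_mult_truncation_level_swap[OF g m Suc.prems(3)] by simp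
qed

theorem proposition15:
  fixes k :: nat and g :: "bool list \<Rightarrow> bool list"
  assumes "k \<ge> 1" and "g \<in> carrier (G_group k)"
  shows "g [^]\<^bsub>G_group k\<^esub> (2::nat) \<in> derived (G_group k) (carrier (G_group k))"
proof -
  have "acts_within_depth k k g" by (simp add: acts_within_depth_def tree_vertices_def)
  then have "g \<otimes>\<^bsub>G_group k\<^esub> g \<in> derived (G_group k) (carrier (G_group k))"
    using square_in_derived_if_acts_within_depth assms(2) by blast
  then show ?thesis
    using assms(2) group.is_monoid[OF group_G_group] by (simp add: numeral_2_eq_2 monoid.l_one)
qed

end
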